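(* Let $k\ge1$ be an integer and let $p=p(n)$ satisfy \[2\frac{\log(n)+\omega(n)}{n}\le p\le 1-(k+1)\frac{\log(n)+\omega(n)}{n}\] for some sequence $\omega(n)\to\infty$. Let $F(x,y)=x^{k+1}\big(y+(1-y)^{k+1}\big)^{x-k-1}$. Then $\lim_{n\to\infty}F(n,p(n))=0$.
   Context: $\log$ is the natural logarithm. *)

theory Defs
  imports Complex_Main
begin

definition F :: "nat \<Rightarrow> real \<Rightarrow> real \<Rightarrow> real" where
  "F k x y = x ^ (k + 1) * (y + (1 - y) ^ (k + 1)) powr (x - real k - 1)"

end

theory Submission
  imports Defs "HOL-Analysis.Analysis" "HOL-Real_Asymp.Real_Asymp"
begin

text \<open>Write \<open>F(x,y) = x^(k+1) g(y)^(x-k-1)\<close> with \<open>g(y) = F_base k y = y + (1-y)^(k+1)\<close> and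
  \<open>L = (log n + \<omega>)/n\<close>, so that \<open>p\<close> ranges over \<open>[2L, 1 - (k+1)L]\<close>. As \<open>g\<close> is convex,
  \<open>g(p)\<close> is at most its value at one of the two endpoints, and there \<open>1 - g \<ge> (k+1)L - O(L^2)\<close>
  and \<open>1 - g \<ge> L\<close>. Using \<open>g^N \<le> exp(-N(1-g))\<close>, \<open>F(n,p) \<le> exp(k+1-T)\<close> with
  \<open>T = n(1-g) - (k+1) log n\<close>. If \<open>(nL)^2 \<le> n\<close> the first bound gives \<open>T \<ge> (k+1)\<omega> - O(1)\<close>,
  otherwise the second gives \<open>T \<ge> sqrt n - (k+1) log n\<close>; either way \<open>T \<rightarrow> \<infinity>\<close>.\<close>

definition F_base :: "nat \<Rightarrow> real \<Rightarrow> real" where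
  "F_base k y = y + (1 - y) ^ (k + 1)"

lemma F_eq_F_base: "F k x y = x ^ (k + 1) * F_base k y powr (x - real k - 1)"
  by (simp add: F_def F_base_def)

lemma F_base_mem_unit:
  assumes "0 \<le> y" "y \<le> 1"
  shows "F_base k y \<in> {0..1}"
proof -
  have "(1 - y) ^ (k + 1) \<le> (1 - y) ^ 1"
    using assms by (intro power_decreasing) auto
  then show ?thesis using assms by (simp add: F_base_def)
qed

lemma convex_on_F_base: "convex_on {0..1} (F_base k)"
  unfolding F_base_def[abs_def]
proof (rule f''_ge0_imp_convex[where f' = "\<lambda>y. 1 - real (k+1) * (1 - y) ^ k"
      and f'' = "\<lambda>y. real (k+1) * real k * (1 - y) ^ (k - 1)"])
  fix x :: real assume x: "x \<in> {0..1}"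
  show "((\<lambda>y. y + (1 - y) ^ (k + 1)) has_real_derivative 1 - real (k+1) * (1 - x) ^ k) (at x)"
    by (rule derivative_eq_intros | simp)+
  show "((\<lambda>y. 1 - real (k+1) * (1 - y) ^ k)
          has_real_derivative real (k+1) * real k * (1 - x) ^ (k - 1)) (at x)"
    by (rule derivative_eq_intros | simp)+
  show "0 \<le> real (k+1) * real k * (1 - x) ^ (k - 1)" using x by simp
qed simp

lemma F_le_max_endpoints:
  assumes "0 \<le> a" "a \<le> y" "y \<le> b" "b \<le> 1" "real k + 1 \<le> x"
  shows "F k x y \<le> max (F k x a) (F k x b)"
proof -
  have "convex_on {a..b} (F_base k)"
    by (rule convex_on_subset[OF convex_on_F_base]) (use assms in auto)
  then have "F_base k y \<le> max (F_base k a) (F_base k b)"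
    using assms by (intro convex_on_le_max) auto
  then obtain c where c: "c \<in> {a, b}" "F_base k y \<le> F_base k c"
    by (metis insertCI max_def)
  have "F_base k y powr (x - real k - 1) \<le> F_base k c powr (x - real k - 1)"
    using c(2) F_base_mem_unit[of y k] assms by (intro powr_mono2) auto
  then have "F k x y \<le> F k x c"
    unfolding F_eq_F_base using assms by (intro mult_left_mono) auto
  then show ?thesis using c(1) by auto
qed

lemma power_one_minus_le_quadratic:
  fixes x :: real
  assumes "0 \<le> x" "x \<le> 1"
  shows "(1 - x) ^ k \<le> 1 - real k * x + real k * (real k - 1) / 2 * x^2"
proof (induction k)
  case (Suc k)
  have "(1 - x) ^ Suc k \<le> (1 - x) * (1 - real k * x + real k * (real k - 1) / 2 * x^2)"
    using Suc assms by (simp add: mult_left_mono)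
  also have "\<dots> = 1 - real (Suc k) * x + real (Suc k) * (real (Suc k) - 1) / 2 * x^2
      - real k * (real k - 1) / 2 * x^3"
    by (simp add: field_simps power2_eq_square power3_eq_cube)
  also have "\<dots> \<le> 1 - real (Suc k) * x + real (Suc k) * (real (Suc k) - 1) / 2 * x^2"
    using assms by (cases k) auto
  finally show ?case .
qed simp

lemma one_minus_F_base_ge_quadratic:
  fixes x :: real
  assumes "0 \<le> x" "x \<le> 1"
  shows "real k * x - real k * (real k + 1) / 2 * x^2 \<le> 1 - F_base k x"
proof -
  define K where "K = real k * (real k - 1) / 2"
  have "K \<ge> 0" by (cases k) (auto simp: K_def)
  have "(1 - x) ^ (k + 1) \<le> (1 - x) * (1 - real k * x + K * x^2)"
    using power_one_minus_le_quadratic[OF assms, of k] assms by (simp add: K_def mult_left_mono)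
  also have "\<dots> = 1 - x - real k * x + (K + real k) * x^2 - K * x^3"
    by (simp add: algebra_simps power2_eq_square power3_eq_cube)
  also have "\<dots> \<le> 1 - x - real k * x + (K + real k) * x^2"
    using \<open>K \<ge> 0\<close> assms by simp
  finally show ?thesis by (simp add: F_base_def K_def field_simps)
qed

lemma one_minus_F_base_ge_half:
  fixes x :: real
  assumes "k \<ge> 1" "0 \<le> x" "x \<le> 1/2"
  shows "x / 2 \<le> 1 - F_base k x"
proof -
  have "(1 - x) ^ (k + 1) \<le> (1 - x)^2"
    using assms by (intro power_decreasing) auto
  moreover have "x * x \<le> x / 2" using assms mult_left_mono[of x "1/2" x] by simp
  ultimately show ?thesis by (simp add: F_base_def power2_eq_square algebra_simps)
qed

lemma one_minus_F_base_near_one: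
  fixes a :: real
  assumes "k \<ge> 1" "0 \<le> a" "a \<le> 1"
  shows "a - a^2 \<le> 1 - F_base k (1 - a)"
proof -
  have "a ^ (k + 1) \<le> a ^ 2" using assms by (intro power_decreasing) auto
  then show ?thesis by (simp add: F_base_def)
qed

lemma one_minus_F_base_at_lower_endpoint:
  fixes L :: real
  assumes k: "k \<ge> 1" and L: "0 \<le> L" "real (k + 3) * L \<le> 1"
  shows "real (k + 1) * L - 2 * real k * real (k + 1) * L^2 \<le> 1 - F_base k (2 * L)"
    and "L \<le> 1 - F_base k (2 * L)"
proof -
  have "2 * L \<le> 1/2" using L k mult_right_mono[of 4 "real (k + 3)" L] by auto
  then show "L \<le> 1 - F_base k (2 * L)"
    using one_minus_F_base_ge_half[OF k, of "2 * L"] L by simp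
  have "real (k + 1) * L \<le> 2 * real k * L" using k L by (simp add: mult_right_mono)
  moreover have "real k * (2 * L) - real k * (real k + 1) / 2 * (2 * L)^2
      = 2 * real k * L - 2 * real k * real (k + 1) * L^2"
    by (simp add: power2_eq_square algebra_simps)
  ultimately show "real (k + 1) * L - 2 * real k * real (k + 1) * L^2 \<le> 1 - F_base k (2 * L)"
    using one_minus_F_base_ge_quadratic[of "2 * L" k] \<open>2 * L \<le> 1/2\<close> L by linarith
qed

lemma one_minus_F_base_at_upper_endpoint:
  fixes L :: real
  assumes k: "k \<ge> 1" and L: "0 \<le> L" "real (k + 3) * L \<le> 1"
  shows "real (k + 1) * L - 2 * real k * real (k + 1) * L^2 \<le> 1 - F_base k (1 - real (k + 1) * L)"
    and "L \<le> 1 - F_base k (1 - real (k + 1) * L)"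
proof -
  define a where "a = real (k + 1) * L"
  have "0 \<le> a" "a \<le> 1" using L by (auto simp: a_def algebra_simps)
  then have gap: "a - a^2 \<le> 1 - F_base k (1 - a)"
    by (rule one_minus_F_base_near_one[OF k])
  have "(real k + 1)^2 \<le> 2 * real k * real (k + 1)"
    using mult_right_mono[of "real k + 1" "2 * real k" "real k + 1"] k
    by (simp add: power2_eq_square algebra_simps)
  then have "(real k + 1)^2 * L^2 \<le> 2 * real k * real (k + 1) * L^2"
    by (rule mult_right_mono) simp
  moreover have "a^2 = (real k + 1)^2 * L^2" by (simp add: a_def power_mult_distrib)
  ultimately show "real (k + 1) * L - 2 * real k * real (k + 1) * L^2 \<le> 1 - F_base k (1 - real (k + 1) * L)"
    using gap by (simp add: a_def)
  have "1 \<le> real (k + 1) * (1 - a)"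
    using L k mult_left_mono[of "real (k + 3) * L" 1 "real k"] mult_right_mono[of 1 "real k" L]
    by (simp add: a_def algebra_simps)
  then have "L * 1 \<le> L * (real (k + 1) * (1 - a))" using L by (intro mult_left_mono) auto
  then have "L \<le> a - a^2" by (simp add: a_def power2_eq_square algebra_simps)
  then show "L \<le> 1 - F_base k (1 - real (k + 1) * L)"
    using gap by (simp add: a_def)
qed

lemma scaled_gap_ge_min:
  fixes n S \<delta> c m :: real
  assumes "0 < n" "0 \<le> S" "0 \<le> c"
    and quadratic: "m * (S / n) - c * (S / n)^2 \<le> \<delta>" and linear: "S / n \<le> \<delta>"
  shows "min (m * S - c) (sqrt n) \<le> n * \<delta>"
proof (cases "S^2 \<le> n")
  case True
  have "S^2 / n \<le> 1" using True assms by simp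
  then have "c * (S^2 / n) \<le> c * 1" using assms(3) by (rule mult_left_mono)
  moreover have "n * (m * (S / n) - c * (S / n)^2) \<le> n * \<delta>"
    using quadratic assms by (intro mult_left_mono) auto
  moreover have "n * (m * (S / n) - c * (S / n)^2) = m * S - c * (S^2 / n)"
    using assms by (simp add: power2_eq_square field_simps)
  ultimately show ?thesis by linarith
next
  case False
  then have "sqrt n \<le> S" using assms by (intro real_le_lsqrt) auto
  moreover have "n * (S / n) \<le> n * \<delta>" using linear assms by (intro mult_left_mono) auto
  ultimately show ?thesis using assms by simp
qed

lemma powr_le_exp_neg:
  fixes g N :: real
  assumes "0 \<le> g" "g \<le> 1" "0 \<le> N"
  shows "g powr N \<le> exp (- N * (1 - g))"
proof (cases "g = 0")
  case False
  then have "N * ln g \<le> N * (g - 1)"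
    using ln_le_minus_one[of g] assms by (intro mult_left_mono) auto
  then show ?thesis using False assms by (simp add: powr_def mult.commute algebra_simps)
qed simp

lemma power_powr_le_exp:
  fixes x g :: real
  assumes x: "real k + 1 \<le> x" and g: "0 \<le> g" "g \<le> 1"
  shows "x ^ (k + 1) * g powr (x - real k - 1)
           \<le> exp (real (k + 1) - (x * (1 - g) - real (k + 1) * ln x))"
proof -
  have "x > 0" using x by linarith
  then have "x ^ (k + 1) = exp (real (k + 1) * ln x)"
    by (simp add: exp_of_nat_mult[symmetric] ln_realpow[symmetric] del: of_nat_Suc)
  moreover have "g powr (x - real k - 1) \<le> exp (- (x - real k - 1) * (1 - g))"
    using g x by (intro powr_le_exp_neg) auto
  ultimately have "x ^ (k + 1) * g powr (x - real k - 1)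
      \<le> exp (real (k + 1) * ln x + - (x - real k - 1) * (1 - g))"
    by (simp add: exp_add mult_left_mono)
  also have "\<dots> \<le> exp (real (k + 1) - (x * (1 - g) - real (k + 1) * ln x))"
    using g mult_left_le[of "1 - g" "real k + 1"] by (simp add: algebra_simps)
  finally show ?thesis .
qed

lemma filterlim_at_top_min:
  fixes f g :: "'a \<Rightarrow> 'b :: linorder"
  assumes "filterlim f at_top net" "filterlim g at_top net"
  shows "filterlim (\<lambda>x. min (f x) (g x)) at_top net"
  using assms unfolding filterlim_at_top by (auto intro: eventually_conj[THEN eventually_mono])

lemma F_le_exp_margin:
  fixes x y w :: real
  assumes k: "k \<ge> 1" and x: "real k + 1 \<le> x" and w: "0 \<le> w"
    and y: "2 * (ln x + w) / x \<le> y" "y \<le> 1 - real (k + 1) * (ln x + w) / x"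
  shows "F k x y \<le> exp (real (k + 1)
           - min (real (k + 1) * w - 2 * real k * real (k + 1)) (sqrt x - real (k + 1) * ln x))"
proof -
  define S where "S = ln x + w"
  define L where "L = S / x"
  have "0 < x" "1 \<le> x" using x by linarith+
  then have "0 \<le> S" using w by (simp add: S_def)
  have y_between: "2 * L \<le> y" "y \<le> 1 - real (k + 1) * L"
    using y by (simp_all add: L_def S_def)
  then have "2 * L + real (k + 1) * L \<le> 1" by linarith
  then have L: "0 \<le> L" "real (k + 3) * L \<le> 1"
    using \<open>0 \<le> S\<close> \<open>0 < x\<close> by (auto simp: L_def algebra_simps)
  have "F k x y \<le> max (F k x (2 * L)) (F k x (1 - real (k + 1) * L))"
    using L y_between x by (intro F_le_max_endpoints) (auto simp: algebra_simps)
  then obtain e where e: "e = 2 * L \<or> e = 1 - real (k + 1) * L" "F k x y \<le> F k x e"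
    by (metis max_def)
  have "2 * L \<le> real (k + 3) * L" "0 \<le> real (k + 1) * L" "real (k + 1) * L \<le> real (k + 3) * L"
    using L by (auto intro: mult_right_mono)
  then have e01: "0 \<le> e" "e \<le> 1" using e(1) L by (smt (verit))+
  have "real (k + 1) * L - 2 * real k * real (k + 1) * L^2 \<le> 1 - F_base k e \<and> L \<le> 1 - F_base k e"
    using e(1) one_minus_F_base_at_lower_endpoint[OF k L] one_minus_F_base_at_upper_endpoint[OF k L]
    by auto
  then have "min (real (k + 1) * S - 2 * real k * real (k + 1)) (sqrt x) \<le> x * (1 - F_base k e)"
    using \<open>0 < x\<close> \<open>0 \<le> S\<close> by (intro scaled_gap_ge_min) (auto simp: L_def)
  moreover have "min (real (k + 1) * w - 2 * real k * real (k + 1)) (sqrt x - real (k + 1) * ln x)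
      = min (real (k + 1) * S - 2 * real k * real (k + 1)) (sqrt x) - real (k + 1) * ln x"
    by (simp add: min_diff_distrib_left S_def algebra_simps)
  ultimately have margin: "min (real (k + 1) * w - 2 * real k * real (k + 1)) (sqrt x - real (k + 1) * ln x)
      \<le> x * (1 - F_base k e) - real (k + 1) * ln x"
    by linarith
  have "F k x y \<le> F k x e" by (rule e(2))
  also have "\<dots> \<le> exp (real (k + 1) - (x * (1 - F_base k e) - real (k + 1) * ln x))"
    unfolding F_eq_F_base using F_base_mem_unit[OF e01] by (intro power_powr_le_exp[OF x]) auto
  also have "\<dots> \<le> exp (real (k + 1)
      - min (real (k + 1) * w - 2 * real k * real (k + 1)) (sqrt x - real (k + 1) * ln x))"
    using margin by simp
  finally show ?thesis .
qed

lemma min_margin_at_top: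
  fixes \<omega> :: "nat \<Rightarrow> real" and c d :: real
  assumes "filterlim \<omega> at_top sequentially" "0 < c"
  shows "filterlim (\<lambda>n. min (c * \<omega> n - d) (sqrt (real n) - c * ln (real n))) at_top sequentially"
proof -
  have "filterlim (\<lambda>n. - d + c * \<omega> n) at_top sequentially"
    using filterlim_tendsto_pos_mult_at_top[OF tendsto_const assms(2,1)]
    by (rule filterlim_tendsto_add_at_top[OF tendsto_const])
  then have "filterlim (\<lambda>n. c * \<omega> n - d) at_top sequentially" by simp
  moreover have "filterlim (\<lambda>n. sqrt (real n) - c * ln (real n)) at_top sequentially"
    by real_asymp
  ultimately show ?thesis by (rule filterlim_at_top_min)
qed

theorem lemma2p9:
  fixes k :: nat and p \<omega> :: "nat \<Rightarrow> real"
  assumes "k \<ge> 1"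
    and "filterlim \<omega> at_top sequentially"
    and "\<forall>\<^sub>F n in sequentially.
           2 * (ln (real n) + \<omega> n) / real n \<le> p n \<and>
           p n \<le> 1 - real (k + 1) * (ln (real n) + \<omega> n) / real n"
  shows "(\<lambda>n. F k (real n) (p n)) \<longlonglongrightarrow> 0"
proof -
  define T where "T n = min (real (k + 1) * \<omega> n - 2 * real k * real (k + 1))
                           (sqrt (real n) - real (k + 1) * ln (real n))" for n
  have "filterlim T at_top sequentially"
    unfolding T_def using assms(2) by (rule min_margin_at_top) simp
  then have "filterlim (\<lambda>n. real (k + 1) - T n) at_bot sequentially"
    unfolding diff_conv_add_uminus filterlim_uminus_at_top
    by (rule filterlim_tendsto_add_at_bot_iff[OF tendsto_const, THEN iffD2])
  then have lim: "(\<lambda>n. exp (real (k + 1) - T n)) \<longlonglongrightarrow> 0"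
    by (rule filterlim_compose[OF exp_at_bot])
  have "\<forall>\<^sub>F n in sequentially. F k (real n) (p n) \<le> exp (real (k + 1) - T n)"
    using assms(3) eventually_ge_at_top[of "k + 1"] assms(2)[unfolded filterlim_at_top, rule_format, of 0]
  proof eventually_elim
    case (elim n)
    then show ?case unfolding T_def by (intro F_le_exp_margin[OF assms(1)]) auto
  qed
  moreover have "\<forall>\<^sub>F n in sequentially. 0 \<le> F k (real n) (p n)"
    by (simp add: F_def)
  ultimately show ?thesis
    by (intro tendsto_sandwich[OF _ _ tendsto_const lim])
qed

end
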